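(* Let $J\ge 2$ be an integer, $\tau_j=2^j$, and for $(\alpha,\beta)\in(0,\infty)\times(0,\pi]$ define $\nu_j(\alpha,\beta)=\dfrac{\alpha^2\{1-\cos(\beta\tau_j/2)\}^2}{\tau_j^2\{1-\cos\beta\}}$ for $j=1,\dots,J$. Then the map $(\alpha,\beta)\mapsto[\nu_j(\alpha,\beta)]_{j=1,\dots,J}$ is injective on $(0,\infty)\times(0,\pi]$: if $\nu_j(\alpha_1,\beta_1)=\nu_j(\alpha_2,\beta_2)$ for all $j=1,\dots,J$, then $(\alpha_1,\beta_1)=(\alpha_2,\beta_2)$.
   Context: $\nu_j(\alpha,\beta)$ is the theoretical Haar wavelet variance at level $j$ of the sinusoidal process $S_t=\alpha\sin(\beta t+U)$, $U\sim\mathcal U(0,2\pi)$. *)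

theory Defs
  imports Complex_Main
begin

definition tau :: "nat \<Rightarrow> real" where
  "tau j = 2 ^ j"

definition nu :: "nat \<Rightarrow> real \<Rightarrow> real \<Rightarrow> real" where
  "nu j \<alpha> \<beta> = \<alpha>^2 * (1 - cos (\<beta> * tau j / 2))^2 / ((tau j)^2 * (1 - cos \<beta>))"

end

theory Submission
  imports Defs
begin

text \<open>The first two levels already determine the parameters: \<open>\<nu>\<^sub>1 = \<alpha>\<^sup>2(1 - cos \<beta>)/4\<close>
  and \<open>\<nu>\<^sub>2 = \<nu>\<^sub>1 (1 + cos \<beta>)\<^sup>2\<close>. Since \<open>\<nu>\<^sub>1 > 0\<close>, the ratio fixes \<open>cos \<beta>\<close>, which is injective
  on \<open>(0, \<pi>]\<close>; then \<open>\<nu>\<^sub>1\<close> fixes \<open>\<alpha> > 0\<close>.\<close>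

lemma nu_one: "nu 1 a b = a\<^sup>2 * (1 - cos b) / 4"
  by (cases "cos b = 1") (simp_all add: nu_def tau_def power2_eq_square field_simps)

lemma nu_two: "nu 2 a b = nu 1 a b * (1 + cos b)\<^sup>2"
proof (cases "cos b = 1")
  case True
  then show ?thesis
    using cos_double_cos[of b] by (simp add: nu_def tau_def mult.commute)
next
  case False
  have half_angle: "1 - cos (b * tau 2 / 2) = 2 * (1 - cos b) * (1 + cos b)"
    using cos_double_cos[of b] by (simp add: tau_def mult.commute algebra_simps power2_eq_square)
  have "nu 2 a b = a\<^sup>2 * (2 * (1 - cos b) * (1 + cos b))\<^sup>2 / (16 * (1 - cos b))"
    unfolding nu_def half_angle by (simp add: tau_def)
  also have "\<dots> = a\<^sup>2 * (1 - cos b) / 4 * (1 + cos b)\<^sup>2"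
    using False by (simp add: power2_eq_square field_simps)
  finally show ?thesis
    unfolding nu_one .
qed

lemma cos_lt_one_0_pi:
  assumes "0 < b" "b \<le> pi"
  shows "cos b < 1"
  using cos_monotone_0_pi[of 0 b] assms by simp

lemma nu_one_pos:
  assumes "a \<noteq> 0" "0 < b" "b \<le> pi"
  shows "nu 1 a b > 0"
  unfolding nu_one using cos_lt_one_0_pi[OF assms(2,3)] assms(1) by simp

theorem lemma2:
  fixes J :: nat and \<alpha>1 \<beta>1 \<alpha>2 \<beta>2 :: real
  assumes "J \<ge> 2"
    and "\<alpha>1 > 0" and "0 < \<beta>1" and "\<beta>1 \<le> pi"
    and "\<alpha>2 > 0" and "0 < \<beta>2" and "\<beta>2 \<le> pi"
    and "\<forall>j\<in>{1..J}. nu j \<alpha>1 \<beta>1 = nu j \<alpha>2 \<beta>2"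
  shows "(\<alpha>1, \<beta>1) = (\<alpha>2, \<beta>2)"
proof -
  have level1: "nu 1 \<alpha>1 \<beta>1 = nu 1 \<alpha>2 \<beta>2" and level2: "nu 2 \<alpha>1 \<beta>1 = nu 2 \<alpha>2 \<beta>2"
    using assms(1,8) by auto
  have "nu 1 \<alpha>1 \<beta>1 \<noteq> 0"
    using nu_one_pos[of \<alpha>1 \<beta>1] assms(2-4) by simp
  then have "(1 + cos \<beta>1)\<^sup>2 = (1 + cos \<beta>2)\<^sup>2"
    using level1 level2 by (simp add: nu_two)
  then have "cos \<beta>1 = cos \<beta>2"
    using cos_ge_minus_one[of \<beta>1] cos_ge_minus_one[of \<beta>2] by (simp add: power2_eq_iff_nonneg)
  then have \<beta>: "\<beta>1 = \<beta>2"
    using cos_inj_pi assms(3,4,6,7) by (meson less_imp_le)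
  then have "\<alpha>1\<^sup>2 = \<alpha>2\<^sup>2"
    using level1 cos_lt_one_0_pi[OF assms(3,4)] unfolding nu_one by simp
  then have "\<alpha>1 = \<alpha>2"
    using assms(2,5) by (simp add: power2_eq_iff_nonneg)
  with \<beta> show ?thesis by simp
qed

end
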